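(* Let $(X,\leqslant)$ be a finite partially ordered set, $U$ a finite set of users and $\lambda\colon U\to X$. Then for any directed path $x_1x_2\dots x_p$ with $p>2$ in $H^*=(X,E_0^* )$ (that is, $x_1>x_2>\dots>x_p$), we have \[ \omega(x_1x_p)\geqslant\sum_{i=1}^{p-1}\omega(x_ix_{i+1}). \]
   Context: $E_0^*=\{xy:x,y\in X,\ x>y\}$. $U(x)=\{u\in U:\lambda(u)=x\}$; for $yz\in E_0^*$, $\gamma(yz)=\{x\in X:x\geqslant z,\ x\not\geqslant y\}$ and $\omega(yz)=\sum_{x\in\gamma(yz)}|U(x)|$. *)

theory Defs
  imports Main
begin

definition users_at :: "'u set \<Rightarrow> ('u \<Rightarrow> 'a) \<Rightarrow> 'a \<Rightarrow> 'u set" where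
  "users_at U lam x = {u \<in> U. lam u = x}"

definition gamma :: "'a::order set \<Rightarrow> 'a \<Rightarrow> 'a \<Rightarrow> 'a set" where
  "gamma X y z = {x \<in> X. x \<ge> z \<and> \<not> x \<ge> y}"

definition omega :: "'a::order set \<Rightarrow> 'u set \<Rightarrow> ('u \<Rightarrow> 'a) \<Rightarrow> 'a \<Rightarrow> 'a \<Rightarrow> nat" where
  "omega X U lam y z = (\<Sum>x\<in>gamma X y z. card (users_at U lam x))"

end

theory Submission
  imports Defs
begin

text \<open>Along a chain \<open>x\<^sub>1 > \<dots> > x\<^sub>p\<close> the sets \<open>\<gamma>(x\<^sub>i x\<^sub>i\<^sub>+\<^sub>1)\<close> are pairwise
  disjoint, since a point above \<open>x\<^sub>j\<^sub>+\<^sub>1\<close> lies above every \<open>x\<^sub>i\<close> with \<open>i \<le> j\<close>, and each of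
  them is contained in \<open>\<gamma>(x\<^sub>1 x\<^sub>p)\<close> because \<open>\<gamma>\<close> is antitone in its second argument and
  monotone in its first. As \<open>\<omega>\<close> sums nonnegative weights over \<open>\<gamma>\<close>, the inequality follows.\<close>

lemma gamma_mono:
  assumes "y \<le> y'" and "z' \<le> z"
  shows "gamma X y z \<subseteq> gamma X y' z'"
  using assms unfolding gamma_def by (auto intro: order_trans)

lemma gamma_disjoint:
  assumes "y' \<le> z"
  shows "gamma X y z \<inter> gamma X y' z' = {}"
  using assms unfolding gamma_def by (auto intro: order_trans)

lemma sum_disjoint_family_le:
  fixes f :: "'a \<Rightarrow> 'b::canonically_ordered_monoid_add"
  assumes "finite I" and "finite B" and "\<forall>i\<in>I. A i \<subseteq> B"
    and "\<forall>i\<in>I. \<forall>j\<in>I. i \<noteq> j \<longrightarrow> A i \<inter> A j = {}"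
  shows "(\<Sum>i\<in>I. sum f (A i)) \<le> sum f B"
proof -
  have finite_A: "\<forall>i\<in>I. finite (A i)"
    using assms(2,3) finite_subset by blast
  have "(\<Sum>i\<in>I. sum f (A i)) = sum f (\<Union>i\<in>I. A i)"
    using sum.UNION_disjoint[OF assms(1) finite_A assms(4)] by (rule sym)
  also have "\<dots> \<le> sum f B"
    using assms(2,3) by (intro sum_mono2) auto
  finally show ?thesis .
qed

theorem corollary3:
  fixes X :: "'a::order set" and U :: "'u set" and lam :: "'u \<Rightarrow> 'a"
    and xs :: "'a list" and p :: nat
  assumes "finite X" and "finite U" and "\<forall>u\<in>U. lam u \<in> X"
    and "length xs = p" and "p > 2" and "set xs \<subseteq> X"
    and "\<forall>i < p - 1. xs ! i > xs ! (i + 1)"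
  shows "omega X U lam (xs ! 0) (xs ! (p - 1))
           \<ge> (\<Sum>i < p - 1. omega X U lam (xs ! i) (xs ! (i + 1)))"
proof -
  let ?G = "\<lambda>i. gamma X (xs ! i) (xs ! (i + 1))"
  have antimono: "xs ! j \<le> xs ! i" if "i \<le> j" and "j \<le> p - 1" for i j
  proof (rule lift_Suc_antimono_le_ivl[of "{..<p - 1}"])
    show "xs ! Suc n \<le> xs ! n" if "n \<in> {..<p - 1}" for n
      using assms(7) that by (simp add: less_imp_le)
  qed (use that in auto)
  have "?G i \<subseteq> gamma X (xs ! 0) (xs ! (p - 1))" if "i < p - 1" for i
    using that by (intro gamma_mono antimono) auto
  moreover have "?G i \<inter> ?G j = {}" if "i \<noteq> j" and "i < p - 1" and "j < p - 1" for i j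
  proof -
    have "?G i \<inter> ?G j = {}" if "i < j" and "j < p - 1" for i j
      using that by (intro gamma_disjoint antimono) auto
    with \<open>i \<noteq> j\<close> \<open>i < p - 1\<close> \<open>j < p - 1\<close> show ?thesis
      by (metis Int_commute linorder_neqE_nat)
  qed
  moreover have "finite (gamma X (xs ! 0) (xs ! (p - 1)))"
    using assms(1) by (simp add: gamma_def)
  ultimately show ?thesis
    unfolding omega_def by (intro sum_disjoint_family_le) auto
qed

end
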